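(* Let $X$ and $Y$ be finite-dimensional real normed spaces and let $P:X\to Y$ be a mapping. Then $P$ is piecewise affine if and only if for every polyhedral partial order $\preceq$ on $Y$ both the $\preceq$-epigraph $\mathrm{epi}_\preceq P:=\{(x,y)\in X\times Y\mid P(x)\preceq y\}$ and the $\preceq$-hypograph $\mathrm{hyp}_\preceq P:=\{(x,y)\in X\times Y\mid y\preceq P(x)\}$ are polyhedral subsets of $X\times Y$.
   Context: A closed halfspace of a finite-dimensional space $Z$ is a set $\{z\in Z\mid a^*(z)\le\alpha\}$ with $a^*$ a nonzero linear functional and $\alpha\in\mathbb{R}$. A convex polyhedral set is an intersection of finitely many closed halfspaces (the whole space counts as convex polyhedral). A (not necessarily convex) set is polyhedral if it is the union of finitely many convex polyhedral sets. A polyhedral covering of a polyhedral set $Q$ is a finite family $\{M_1,\dots,M_k\}$ of convex polyhedral sets with $M_i\subset Q$ and $\bigcup_i M_i=Q$. A mapping $P:X\to Y$ is piecewise affine if there exist a polyhedral covering $\{M_1,\dots,M_k\}$ of $X$ and affine mappings $A_i:X\to Y$ (a linear mapping plus a constant) with $P(x)=A_i(x)$ for all $x\in M_i$, $i=1,\dots,k$. A partial order $\preceq$ on $Y$ is polyhedral if it is compatible with the vector operations (i.e. $y\preceq y'$ implies $y+z\preceq y'+z$ and $\lambda y\preceq\lambda y'$ for $\lambda\ge0$) and its positive cone $\{y\in Y\mid 0\preceq y\}$ is a convex polyhedral set. *)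

theory Defs
  imports "HOL-Analysis.Analysis"
begin

text \<open>Convex polyhedral sets are the library notion polyhedron (finite intersection
of closed halfspaces with nonzero normal; the empty intersection is the whole space).\<close>

definition polyhedral_set :: "'a::euclidean_space set \<Rightarrow> bool" where
  "polyhedral_set Q \<longleftrightarrow> (\<exists>F. finite F \<and> (\<forall>M\<in>F. polyhedron M) \<and> Q = \<Union>F)"

definition piecewise_affine :: "('a::euclidean_space \<Rightarrow> 'b::euclidean_space) \<Rightarrow> bool" where
  "piecewise_affine P \<longleftrightarrow>
     (\<exists>F. finite F \<and> (\<forall>M\<in>F. polyhedron M) \<and> \<Union>F = UNIV \<and>
          (\<forall>M\<in>F. \<exists>A c. linear A \<and> (\<forall>x\<in>M. P x = A x + c)))"

definition polyhedral_order :: "('b::euclidean_space \<Rightarrow> 'b \<Rightarrow> bool) \<Rightarrow> bool" where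
  "polyhedral_order le \<longleftrightarrow>
     (\<forall>y. le y y) \<and>
     (\<forall>y y'. le y y' \<and> le y' y \<longrightarrow> y = y') \<and>
     (\<forall>y y' y''. le y y' \<and> le y' y'' \<longrightarrow> le y y'') \<and>
     (\<forall>y y' z. le y y' \<longrightarrow> le (y + z) (y' + z)) \<and>
     (\<forall>y y' (t::real). le y y' \<and> 0 \<le> t \<longrightarrow> le (t *\<^sub>R y) (t *\<^sub>R y')) \<and>
     polyhedron {y. le 0 y}"

definition epigraph_wrt :: "('b \<Rightarrow> 'b \<Rightarrow> bool) \<Rightarrow> ('a \<Rightarrow> 'b) \<Rightarrow> ('a \<times> 'b) set" where
  "epigraph_wrt le P = {(x, y). le (P x) y}"

definition hypograph_wrt :: "('b \<Rightarrow> 'b \<Rightarrow> bool) \<Rightarrow> ('a \<Rightarrow> 'b) \<Rightarrow> ('a \<times> 'b) set" where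
  "hypograph_wrt le P = {(x, y). le y (P x)}"

end

theory Submission
  imports Defs
begin

text \<open>If P is piecewise affine, then both sets are preimages of a polyhedral cone under
the piecewise affine map (x, y) \<mapsto> y - P x, and the preimage of a polyhedron under a
piecewise affine map is polyhedral, piece by piece. Conversely, equality is a polyhedral
order (its positive cone is {0}), and its epigraph is the graph of P. A convex set that is
a graph is contained in the graph of an affine map, because the graph property propagates
to its affine hull; so the polyhedra covering the graph of P project onto a polyhedral
covering of X on whose pieces P is affine.\<close>

lemma polyhedron_affine_vimage:
  fixes L :: "'a::euclidean_space \<Rightarrow> 'b::euclidean_space"
  assumes "polyhedron S" "linear L"
  shows "polyhedron ((\<lambda>x. L x + c) -` S)"
proof -
  obtain F where F: "finite F" "S = \<Inter>F" "\<forall>h\<in>F. \<exists>a b. a \<noteq> 0 \<and> h = {x. a \<bullet> x \<le> b}"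
    using assms(1) unfolding polyhedron_def by blast
  have "polyhedron ((\<lambda>x. L x + c) -` h)" if "h \<in> F" for h
  proof -
    obtain a b where h: "h = {x. a \<bullet> x \<le> b}" using F(3) \<open>h \<in> F\<close> by blast
    have "a \<bullet> (L x + c) = adjoint L a \<bullet> x + a \<bullet> c" for x
      using adjoint_works[OF assms(2), of x a] by (simp add: inner_add_right inner_commute)
    then have "(\<lambda>x. L x + c) -` h = {x. adjoint L a \<bullet> x \<le> b - a \<bullet> c}"
      by (auto simp: h algebra_simps)
    then show ?thesis by (simp add: polyhedron_halfspace_le)
  qed
  moreover have "(\<lambda>x. L x + c) -` S = \<Inter>((\<lambda>h. (\<lambda>x. L x + c) -` h) ` F)"
    by (auto simp: F(2))
  ultimately show ?thesis
    using F(1) by (auto intro: polyhedron_Inter)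
qed

lemma piecewise_affineE:
  assumes "piecewise_affine P"
  obtains F A c where "finite F" "\<And>M. M \<in> F \<Longrightarrow> polyhedron M" "\<Union>F = UNIV"
    "\<And>M. M \<in> F \<Longrightarrow> linear (A M)" "\<And>M x. M \<in> F \<Longrightarrow> x \<in> M \<Longrightarrow> P x = A M x + c M"
proof -
  obtain F where F: "finite F" "\<forall>M\<in>F. polyhedron M" "\<Union>F = UNIV"
    and ex: "\<forall>M\<in>F. \<exists>A c. linear A \<and> (\<forall>x\<in>M. P x = A x + c)"
    using assms unfolding piecewise_affine_def by blast
  obtain A where "\<forall>M\<in>F. \<exists>c. linear (A M) \<and> (\<forall>x\<in>M. P x = A M x + c)"
    using bchoice[OF ex] by (elim exE)
  then obtain c where "\<forall>M\<in>F. linear (A M) \<and> (\<forall>x\<in>M. P x = A M x + c M)"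
    by (elim bchoice[elim_format] exE)
  with F show thesis by (intro that[of F A c]) auto
qed

lemma polyhedral_set_piecewise_affine_vimage:
  fixes f :: "'a::euclidean_space \<Rightarrow> 'b::euclidean_space"
  assumes "piecewise_affine f" "polyhedron K"
  shows "polyhedral_set (f -` K)"
proof -
  obtain F A c where F: "finite F" "\<And>M. M \<in> F \<Longrightarrow> polyhedron M" "\<Union>F = UNIV"
    and A: "\<And>M. M \<in> F \<Longrightarrow> linear (A M)"
    and f: "\<And>M x. M \<in> F \<Longrightarrow> x \<in> M \<Longrightarrow> f x = A M x + c M"
    using assms(1) by (rule piecewise_affineE) (rule that)
  define piece where "piece M = M \<inter> (\<lambda>x. A M x + c M) -` K" for M
  have "x \<in> f -` K \<longleftrightarrow> (\<exists>M\<in>F. x \<in> piece M)" for x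
  proof -
    obtain M where M: "M \<in> F" "x \<in> M" using F(3) by blast
    show ?thesis
      using f[OF M] f M by (fastforce simp: piece_def)
  qed
  then have "f -` K = \<Union>(piece ` F)" by blast
  moreover have "polyhedron (piece M)" if "M \<in> F" for M
    unfolding piece_def
    using F(2)[OF that] polyhedron_affine_vimage[OF assms(2) A[OF that]] by (rule polyhedron_Int)
  ultimately show ?thesis
    unfolding polyhedral_set_def using F(1) by (intro exI[of _ "piece ` F"]) auto
qed

lemma piecewise_affine_graph_difference:
  fixes P :: "'a::euclidean_space \<Rightarrow> 'b::euclidean_space"
  assumes "piecewise_affine P"
  shows "piecewise_affine (\<lambda>z::'a \<times> 'b. snd z - P (fst z))"
proof -
  obtain F A c where F: "finite F" "\<And>M. M \<in> F \<Longrightarrow> polyhedron M" "\<Union>F = UNIV"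
    and A: "\<And>M. M \<in> F \<Longrightarrow> linear (A M)"
    and P: "\<And>M x. M \<in> F \<Longrightarrow> x \<in> M \<Longrightarrow> P x = A M x + c M"
    using assms by (rule piecewise_affineE) (rule that)
  show ?thesis
    unfolding piecewise_affine_def
  proof (intro exI[of _ "(\<lambda>M. fst -` M :: ('a \<times> 'b) set) ` F"] conjI ballI)
    show "finite ((\<lambda>M. fst -` M) ` F)" using F(1) by simp
    show "\<Union>((\<lambda>M. fst -` M) ` F) = UNIV" using F(3) by blast
  next
    fix N :: "('a \<times> 'b) set" assume "N \<in> (\<lambda>M. fst -` M) ` F"
    then obtain M where M: "M \<in> F" and N: "N = fst -` M" by blast
    show "polyhedron N"
      using polyhedron_affine_vimage[OF F(2)[OF M] linear_fst, of 0] by (simp add: N)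
    have "linear (\<lambda>z::'a \<times> 'b. snd z - A M (fst z))"
      using linear_compose[OF linear_fst A[OF M]] by (intro linear_compose_sub linear_snd) (simp add: o_def)
    moreover have "snd z - P (fst z) = (snd z - A M (fst z)) + - c M" if "z \<in> N" for z
      using P[OF M, of "fst z"] that by (simp add: N)
    ultimately show "\<exists>B d. linear B \<and> (\<forall>z\<in>N. snd z - P (fst z) = B z + d)"
      by blast
  qed
qed

lemma polyhedral_order_add_right:
  assumes "polyhedral_order le" "le y y'"
  shows "le (y + z) (y' + z)"
  using assms unfolding polyhedral_order_def by fast

lemma polyhedron_polyhedral_order_cone:
  assumes "polyhedral_order le"
  shows "polyhedron {y. le 0 y}"
  using assms unfolding polyhedral_order_def by (elim conjE)

lemma polyhedral_order_iff_cone: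
  assumes "polyhedral_order le"
  shows "le u y \<longleftrightarrow> y - u \<in> {y. le 0 y}"
  using polyhedral_order_add_right[OF assms, of u y "- u"]
    polyhedral_order_add_right[OF assms, of 0 "y - u" u]
  by auto

lemma polyhedral_order_eq: "polyhedral_order (\<lambda>x y::'b::euclidean_space. x = y)"
proof -
  have "polyhedron {y::'b. 0 = y}"
    using affine_imp_polyhedron[OF affine_sing] by (simp add: eq_commute)
  then show ?thesis
    unfolding polyhedral_order_def by blast
qed

lemma epigraph_wrt_polyhedral_order:
  assumes "polyhedral_order le"
  shows "epigraph_wrt le P = (\<lambda>z. snd z - P (fst z)) -` {y. le 0 y}"
proof -
  have "le (P x) y \<longleftrightarrow> y - P x \<in> {y. le 0 y}" for x y
    by (rule polyhedral_order_iff_cone[OF assms])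
  then show ?thesis by (auto simp: epigraph_wrt_def)
qed

lemma hypograph_wrt_polyhedral_order:
  assumes "polyhedral_order le"
  shows "hypograph_wrt le P = (\<lambda>z. snd z - P (fst z)) -` (uminus ` {y. le 0 y})"
proof -
  have "le y (P x) \<longleftrightarrow> y - P x \<in> uminus ` {y. le 0 y}" for x y
  proof -
    have "le y (P x) \<longleftrightarrow> P x - y \<in> {y. le 0 y}"
      by (rule polyhedral_order_iff_cone[OF assms])
    also have "\<dots> \<longleftrightarrow> - (P x - y) \<in> uminus ` {y. le 0 y}"
      by (simp only: inj_image_mem_iff[OF inj_uminus])
    also have "- (P x - y) = y - P x"
      by simp
    finally show ?thesis .
  qed
  then show ?thesis by (auto simp: hypograph_wrt_def)
qed

lemma piecewise_affine_imp_polyhedral_epigraph_hypograph: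
  fixes P :: "'a::euclidean_space \<Rightarrow> 'b::euclidean_space"
  assumes "piecewise_affine P" "polyhedral_order le"
  shows "polyhedral_set (epigraph_wrt le P) \<and> polyhedral_set (hypograph_wrt le P)"
proof -
  note difference = piecewise_affine_graph_difference[OF assms(1)]
  note cone = polyhedron_polyhedral_order_cone[OF assms(2)]
  show ?thesis
    unfolding epigraph_wrt_polyhedral_order[OF assms(2)] hypograph_wrt_polyhedral_order[OF assms(2)]
    using polyhedral_set_piecewise_affine_vimage[OF difference cone]
      polyhedral_set_piecewise_affine_vimage[OF difference polyhedron_negations[OF cone]]
    by (rule conjI)
qed

lemma inj_on_fst_affine_hull:
  fixes S :: "('a::euclidean_space \<times> 'b::euclidean_space) set"
  assumes "convex S" "inj_on fst S"
  shows "inj_on fst (affine hull S)"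
proof (cases "S = {}")
  case False
  then obtain r where "r \<in> rel_interior S"
    using rel_interior_eq_empty[OF assms(1)] by auto
  then obtain e where r: "r \<in> S" and e: "e > 0" "cball r e \<inter> affine hull S \<subseteq> S"
    unfolding mem_rel_interior_cball by blast
  show ?thesis
  proof (rule inj_onI)
    fix p q assume pq: "p \<in> affine hull S" "q \<in> affine hull S" "fst p = fst q"
    \<comment> \<open>w is close enough to r to lie in S, and has the same fst as r\<close>
    define s where "s = e / (norm (p - q) + 1)"
    define w where "w = r + s *\<^sub>R (p - q)"
    have denom: "norm (p - q) + 1 > 0"
      using norm_ge_zero[of "p - q"] by linarith
    have s_pos: "s > 0"
      using e(1) denom by (simp add: s_def)
    have "s * norm (p - q) + s = s * (norm (p - q) + 1)"
      by (simp add: algebra_simps)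
    also have "\<dots> = e"
      using denom by (simp add: s_def)
    finally have s_norm: "s * norm (p - q) \<le> e"
      using s_pos by linarith
    have "w \<in> affine hull S"
      unfolding w_def using r pq hull_subset[of S affine]
      by (intro mem_affine_3_minus affine_affine_hull) auto
    moreover have "w \<in> cball r e"
      using s_pos s_norm by (simp add: w_def dist_norm)
    ultimately have "w \<in> S" using e(2) by blast
    moreover have "fst w = fst r" using pq(3) by (simp add: w_def)
    ultimately have "w = r" using assms(2) r by (auto dest: inj_onD)
    then show "p = q" using s_pos by (simp add: w_def)
  qed
qed simp

lemma affine_inj_on_fst_imp_affine_graph:
  fixes S :: "('a::euclidean_space \<times> 'b::euclidean_space) set"
  assumes "affine S" "inj_on fst S"
  shows "\<exists>A c. linear A \<and> (\<forall>p\<in>S. snd p = A (fst p) + c)"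
proof (cases "S = {}")
  case True
  then show ?thesis using linear_zero by blast
next
  case False
  then obtain r where r: "r \<in> S" by blast
  define V where "V = (\<lambda>p. - r + p) ` S"
  have "subspace V" unfolding V_def using affine_diffs_subspace[OF assms(1) r] .
  moreover have "inj_on fst V"
    using assms(2) by (auto simp: V_def inj_on_def)
  ultimately obtain g where g: "linear g" "\<forall>v\<in>V. g (fst v) = v"
    using linear_exists_left_inverse_on[OF linear_fst] by blast
  have "snd p = snd (g (fst p - fst r)) + snd r" if "p \<in> S" for p
    using g(2) that by (force simp: V_def)
  moreover have "linear (\<lambda>x. snd (g x))"
    using linear_compose[OF g(1) linear_snd] by (simp add: o_def)
  ultimately show ?thesis
    by (intro exI[of _ "\<lambda>x. snd (g x)"] exI[of _ "snd r - snd (g (fst r))"])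
       (auto simp: linear_diff[OF g(1)])
qed

lemma convex_inj_on_fst_imp_affine_graph:
  fixes S :: "('a::euclidean_space \<times> 'b::euclidean_space) set"
  assumes "convex S" "inj_on fst S"
  shows "\<exists>A c. linear A \<and> (\<forall>p\<in>S. snd p = A (fst p) + c)"
proof -
  obtain A c where "linear A" "\<forall>p\<in>affine hull S. snd p = A (fst p) + c"
    using affine_inj_on_fst_imp_affine_graph[OF affine_affine_hull inj_on_fst_affine_hull[OF assms]]
    by blast
  then show ?thesis
    using hull_subset[of S affine] by blast
qed

lemma linear_graph_map:
  fixes A :: "'a::euclidean_space \<Rightarrow> 'b::euclidean_space"
  assumes "linear A"
  shows "linear (\<lambda>x. (x, A x))"
  using assms by (simp add: linear_conv_bounded_linear bounded_linear_Pair bounded_linear_ident)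

lemma polyhedral_graph_imp_piecewise_affine:
  fixes P :: "'a::euclidean_space \<Rightarrow> 'b::euclidean_space"
  assumes "polyhedral_set (range (\<lambda>x. (x, P x)))"
  shows "piecewise_affine P"
proof -
  obtain FG where FG: "finite FG" "\<forall>G\<in>FG. polyhedron G" "range (\<lambda>x. (x, P x)) = \<Union>FG"
    using assms unfolding polyhedral_set_def by (elim exE conjE) (rule that)
  have graph: "snd p = P (fst p)" if "G \<in> FG" "p \<in> G" for G p
  proof -
    have "p \<in> range (\<lambda>x. (x, P x))" using UnionI[OF that] FG(3) by simp
    then show ?thesis by auto
  qed
  have pieces: "\<forall>G\<in>FG. \<exists>A c. linear A \<and> (\<forall>p\<in>G. snd p = A (fst p) + c)"
  proof
    fix G assume G: "G \<in> FG"
    show "\<exists>A c. linear A \<and> (\<forall>p\<in>G. snd p = A (fst p) + c)"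
    proof (rule convex_inj_on_fst_imp_affine_graph)
      show "convex G" using FG(2) G by (simp add: polyhedron_imp_convex)
      show "inj_on fst G"
        using graph[OF G] by (intro inj_onI) (simp add: prod_eq_iff)
    qed
  qed
  obtain A where "\<forall>G\<in>FG. \<exists>c. linear (A G) \<and> (\<forall>p\<in>G. snd p = A G (fst p) + c)"
    using bchoice[OF pieces] by (elim exE)
  then obtain c where Ac: "\<forall>G\<in>FG. linear (A G) \<and> (\<forall>p\<in>G. snd p = A G (fst p) + c G)"
    by (elim bchoice[elim_format] exE)
  define M where "M G = (\<lambda>x. (x, A G x) + (0, c G)) -` G" for G
  show ?thesis
    unfolding piecewise_affine_def
  proof (intro exI[of _ "M ` FG"] conjI ballI)
    show "finite (M ` FG)" using FG(1) by simp
  next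
    fix N assume "N \<in> M ` FG"
    then obtain G where G: "G \<in> FG" and N: "N = M G" by blast
    have "linear (\<lambda>x. (x, A G x))" using Ac G by (simp add: linear_graph_map)
    then show "polyhedron N"
      unfolding N M_def using FG(2) G by (intro polyhedron_affine_vimage) auto
    have "P x = A G x + c G" if "x \<in> N" for x
      using graph[OF G, of "(x, A G x + c G)"] that by (simp add: N M_def)
    then show "\<exists>A c. linear A \<and> (\<forall>x\<in>N. P x = A x + c)" using Ac G by blast
  next
    have "x \<in> \<Union>(M ` FG)" for x
    proof -
      obtain G where G: "G \<in> FG" "(x, P x) \<in> G" using FG(3) by blast
      then have "P x = A G x + c G" using Ac by fastforce
      then have "x \<in> M G" using G(2) by (simp add: M_def)
      then show ?thesis using G(1) by blast
    qed
    then show "\<Union>(M ` FG) = UNIV" by blast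
  qed
qed

theorem theorem4p2:
  fixes P :: "'a::euclidean_space \<Rightarrow> 'b::euclidean_space"
  shows "piecewise_affine P \<longleftrightarrow>
    (\<forall>le. polyhedral_order le \<longrightarrow>
       polyhedral_set (epigraph_wrt le P) \<and> polyhedral_set (hypograph_wrt le P))"
proof
  assume "piecewise_affine P"
  then show "\<forall>le. polyhedral_order le \<longrightarrow>
      polyhedral_set (epigraph_wrt le P) \<and> polyhedral_set (hypograph_wrt le P)"
    using piecewise_affine_imp_polyhedral_epigraph_hypograph by blast
next
  assume "\<forall>le. polyhedral_order le \<longrightarrow>
      polyhedral_set (epigraph_wrt le P) \<and> polyhedral_set (hypograph_wrt le P)"
  then have "polyhedral_set (epigraph_wrt (\<lambda>x y. x = y) P)"
    using polyhedral_order_eq by blast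
  moreover have "epigraph_wrt (\<lambda>x y. x = y) P = range (\<lambda>x. (x, P x))"
    by (auto simp: epigraph_wrt_def)
  ultimately show "piecewise_affine P"
    by (simp add: polyhedral_graph_imp_piecewise_affine)
qed

end
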